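(* Let $\lambda$ be a nonzero real number, $x$ real, and $n\ge0$ an integer. Then $$\beta_{n,\lambda}(x)=\sum_{k=0}^{n}k!\,S_{2,\lambda}(n,k)\sum_{j=0}^{k}\binom{x}{j}\frac{\lambda^{k-j}}{(k-j+1)!}(1)_{k-j+1,\frac{1}{\lambda}}.$$ In particular, for $x=0$, $$\beta_{n,\lambda}=\sum_{k=0}^{n}k!\,S_{2,\lambda}(n,k)\frac{\lambda^{k}}{(k+1)!}(1)_{k+1,\frac{1}{\lambda}}.$$
   Context: For real $y$, $\mu\neq 0$ and integer $k\ge0$: $(y)_{0,\mu}=1$, $(y)_{k,\mu}=y(y-\mu)\cdots(y-(k-1)\mu)$ (used with $\mu=\lambda$ and $\mu=1/\lambda$); $(y)_0=1$, $(y)_k=y(y-1)\cdots(y-k+1)$. The degenerate exponential is $e_\lambda^x(t)=\sum_{k\ge0}(x)_{k,\lambda}t^k/k!=(1+\lambda t)^{x/\lambda}$, $e_\lambda(t)=e^1_\lambda(t)$. The degenerate Bernoulli polynomials are defined by $\frac{t}{e_\lambda(t)-1}e_\lambda^x(t)=\sum_{n\ge0}\beta_{n,\lambda}(x)\frac{t^n}{n!}$, and $\beta_{n,\lambda}=\beta_{n,\lambda}(0)$. The degenerate Stirling numbers of the second kind are defined by $(x)_{n,\lambda}=\sum_{k=0}^{n}S_{2,\lambda}(n,k)(x)_{k}$ ($n\ge0$). *)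

theory Defs
  imports "HOL-Analysis.Analysis" "HOL-Computational_Algebra.Formal_Power_Series"
begin

definition gen_ff :: "real \<Rightarrow> nat \<Rightarrow> real \<Rightarrow> real" where
  "gen_ff y k mu = (\<Prod>i<k. (y - of_nat i * mu))"

definition ffall :: "real \<Rightarrow> nat \<Rightarrow> real" where
  "ffall y k = (\<Prod>i<k. (y - of_nat i))"

definition deg_exp :: "real \<Rightarrow> real \<Rightarrow> real fps" where
  "deg_exp lam x = Abs_fps (\<lambda>k. gen_ff x k lam / fact k)"

definition deg_bernoulli :: "real \<Rightarrow> nat \<Rightarrow> real \<Rightarrow> real" where
  "deg_bernoulli lam n x =
     fact n * fps_nth ((fps_X / (deg_exp lam 1 - 1)) * deg_exp lam x) n"

definition deg_stirling2 :: "real \<Rightarrow> nat \<Rightarrow> nat \<Rightarrow> real" where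
  "deg_stirling2 lam n =
     (THE c. (\<forall>k>n. c k = 0) \<and> (\<forall>x. gen_ff x n lam = (\<Sum>k=0..n. c k * ffall x k)))"

end

theory Submission
  imports Defs
begin

text \<open>
  Put \<open>E(t) = e\<^sub>\<lambda>(t) - 1\<close>. Both \<open>e\<^sub>\<lambda>\<^sup>x(t)\<close> and \<open>(1 + E(t))\<^sup>x\<close> solve
  \<open>(1 + \<lambda>t) y' = x y\<close> with \<open>y(0) = 1\<close>, so \<open>e\<^sub>\<lambda>\<^sup>x(t) = \<Sum>\<^sub>k (x choose k) E(t)\<^sup>k\<close>.
  Comparing coefficients with \<open>(x)\<^sub>n\<^sub>,\<^sub>\<lambda> = \<Sum>\<^sub>k S\<^sub>2\<^sub>,\<^sub>\<lambda>(n,k) (x)\<^sub>k\<close> gives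
  \<open>S\<^sub>2\<^sub>,\<^sub>\<lambda>(n,k) = n!/k! [t\<^sup>n] E(t)\<^sup>k\<close>, hence
  \<open>[t\<^sup>n] A(E(t)) = (1/n!) \<Sum>\<^sub>k k! S\<^sub>2\<^sub>,\<^sub>\<lambda>(n,k) [s\<^sup>k] A(s)\<close> for every series \<open>A\<close>.
  Since \<open>e\<^sub>\<lambda>(t)\<^sup>\<lambda> = 1 + \<lambda>t\<close>, the degenerate logarithm \<open>((1+s)\<^sup>\<lambda> - 1)/\<lambda>\<close> inverts
  \<open>E\<close>, so \<open>t/E(t) = C(E(t))\<close> with \<open>C(s) = ((1+s)\<^sup>\<lambda> - 1)/(\<lambda>s)\<close>, whose coefficients are
  \<open>\<lambda>\<^sup>m (1)\<^sub>m\<^sub>+\<^sub>1\<^sub>,\<^sub>1\<^sub>/\<^sub>\<lambda> / (m+1)!\<close>. Thus the generating function of \<open>\<beta>\<^sub>n\<^sub>,\<^sub>\<lambda>(x)\<close> is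
  \<open>C(s) (1+s)\<^sup>x\<close> evaluated at \<open>s = E(t)\<close>, and the formula is the Cauchy product of \<open>C\<close> and
  \<open>(1+s)\<^sup>x\<close>.
\<close>

lemma gen_ff_0 [simp]: "gen_ff y 0 mu = 1"
  by (simp add: gen_ff_def)

lemma gen_ff_Suc: "gen_ff y (Suc n) mu = gen_ff y n mu * (y - of_nat n * mu)"
  by (simp add: gen_ff_def lessThan_Suc)

lemma gen_ff_scale: "gen_ff (a * y) k (a * mu) = a ^ k * gen_ff y k mu"
  by (induction k) (simp_all add: gen_ff_Suc algebra_simps)

lemma ffall_eq_gen_ff: "ffall y k = gen_ff y k 1"
  by (simp add: ffall_def gen_ff_def)

lemma ffall_eq_fact_gchoose: "ffall x k = fact k * (x gchoose k)"
  by (simp add: ffall_def gbinomial_prod_rev atLeast0LessThan)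

lemma ffall_eq_power_gen_ff:
  assumes "lam \<noteq> 0"
  shows "ffall lam k = lam ^ k * gen_ff 1 k (1 / lam)"
  using gen_ff_scale[of lam 1 k "1 / lam"] assms by (simp add: ffall_eq_gen_ff)

lemma deg_exp_nth [simp]: "fps_nth (deg_exp lam c) n = gen_ff c n lam / fact n"
  by (simp add: deg_exp_def)

lemma deg_exp_nonzero: "deg_exp lam c \<noteq> 0"
proof
  assume "deg_exp lam c = 0"
  then have "fps_nth (deg_exp lam c) 0 = 0" by simp
  then show False by simp
qed

lemma deg_exp_self: "deg_exp lam lam = 1 + fps_const lam * fps_X"
proof (rule fps_ext)
  fix n
  show "fps_nth (deg_exp lam lam) n = fps_nth (1 + fps_const lam * fps_X) n"
  proof (cases "n \<le> 1")
    case True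
    then show ?thesis by (cases n) (auto simp: gen_ff_def)
  next
    case False
    then have "gen_ff lam n lam = 0"
      unfolding gen_ff_def by (intro prod_zero bexI[of _ 1]) auto
    with False show ?thesis by simp
  qed
qed

lemma deg_exp_ode:
  "(1 + fps_const lam * fps_X) * fps_deriv (deg_exp lam c) = fps_const c * deg_exp lam c"
proof (rule fps_ext)
  fix n
  have "fps_nth ((1 + fps_const lam * fps_X) * fps_deriv (deg_exp lam c)) n
        = of_nat (Suc n) * (gen_ff c (Suc n) lam / fact (Suc n))
          + lam * (of_nat n * (gen_ff c n lam / fact n))"
    by (cases n) (simp_all add: algebra_simps del: fact_Suc of_nat_Suc)
  also have "\<dots> = (gen_ff c n lam * (c - of_nat n * lam) + lam * of_nat n * gen_ff c n lam) / fact n"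
    by (simp add: gen_ff_Suc add_divide_distrib del: of_nat_Suc)
  also have "\<dots> = c * (gen_ff c n lam / fact n)"
    by (simp add: algebra_simps)
  finally show "fps_nth ((1 + fps_const lam * fps_X) * fps_deriv (deg_exp lam c)) n
                = fps_nth (fps_const c * deg_exp lam c) n"
    by simp
qed

lemma deg_exp_ode_unique:
  fixes Y :: "real fps"
  assumes "(1 + fps_const lam * fps_X) * fps_deriv Y = fps_const c * Y"
  shows "Y = fps_const (fps_nth Y 0) * deg_exp lam c"
proof -
  have coeff: "fps_nth Y n = fps_nth Y 0 * gen_ff c n lam / fact n" for n
  proof (induction n)
    case (Suc n)
    have "fps_nth ((1 + fps_const lam * fps_X) * fps_deriv Y) n = fps_nth (fps_const c * Y) n"
      using assms by simp
    then have "of_nat (Suc n) * fps_nth Y (Suc n) + lam * (of_nat n * fps_nth Y n) = c * fps_nth Y n"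
      by (cases n) (simp_all add: algebra_simps)
    then have "fps_nth Y (Suc n) = (c - of_nat n * lam) * fps_nth Y n / of_nat (Suc n)"
      by (simp add: field_simps del: of_nat_Suc)
    also have "\<dots> = fps_nth Y 0 * gen_ff c (Suc n) lam / fact (Suc n)"
      by (simp add: Suc.IH gen_ff_Suc mult_ac)
    finally show ?case .
  qed simp
  show ?thesis
  proof (rule fps_ext)
    fix n
    show "fps_nth Y n = fps_nth (fps_const (fps_nth Y 0) * deg_exp lam c) n"
      using coeff[of n] by simp
  qed
qed

lemma fps_binomial_ode:
  "(1 + fps_X) * fps_deriv (fps_binomial c) = fps_const (c :: 'a :: field_char_0) * fps_binomial c"
proof -
  have "inverse (1 + fps_X) * (1 + fps_X) = (1 :: 'a fps)"
    by (rule inverse_mult_eq_1) simp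
  then show ?thesis
    by (simp add: fps_binomial_deriv fps_divide_unit algebra_simps)
qed

definition deg_exp_minus_one :: "real \<Rightarrow> real fps" where
  "deg_exp_minus_one lam = deg_exp lam 1 - 1"

lemma deg_exp_minus_one_nth_0 [simp]: "fps_nth (deg_exp_minus_one lam) 0 = 0"
  by (simp add: deg_exp_minus_one_def)

lemma deg_exp_minus_one_nonzero: "deg_exp_minus_one lam \<noteq> 0"
proof
  assume "deg_exp_minus_one lam = 0"
  then have "fps_nth (deg_exp_minus_one lam) 1 = 0" by simp
  then show False by (simp add: deg_exp_minus_one_def gen_ff_def)
qed

lemma deg_exp_eq_binomial_compose:
  "deg_exp lam c = fps_binomial c oo deg_exp_minus_one lam"
proof -
  define E where "E = deg_exp_minus_one lam"
  define D where "D = deg_exp lam 1"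
  define H where "H = fps_binomial c oo E"
  define P where "P = 1 + fps_const lam * fps_X"
  have E0: "fps_nth E 0 = 0" and D_eq: "D = 1 + E"
    by (simp_all add: E_def D_def deg_exp_minus_one_def)
  have binomial_ode_at_E: "D * (fps_deriv (fps_binomial c) oo E) = fps_const c * H"
    using arg_cong[OF fps_binomial_ode, of "\<lambda>A. A oo E"] E0
    by (simp add: D_eq H_def fps_compose_mult_distrib fps_compose_add_distrib)
  have chain_rule: "fps_deriv H = (fps_deriv (fps_binomial c) oo E) * fps_deriv D"
    using E0 by (simp add: D_eq H_def fps_compose_deriv)
  have deg_exp_ode_at_1: "P * fps_deriv D = D"
    using deg_exp_ode[of lam 1] by (simp add: P_def D_def)
  have "D * (P * fps_deriv H) = (D * (fps_deriv (fps_binomial c) oo E)) * (P * fps_deriv D)"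
    by (simp add: chain_rule algebra_simps)
  also have "\<dots> = D * (fps_const c * H)"
    by (simp add: binomial_ode_at_E deg_exp_ode_at_1 algebra_simps)
  moreover have "D \<noteq> 0"
    by (simp add: D_def deg_exp_nonzero)
  ultimately have "P * fps_deriv H = fps_const c * H"
    by simp
  then have "H = fps_const (fps_nth H 0) * deg_exp lam c"
    unfolding P_def by (rule deg_exp_ode_unique)
  then show ?thesis
    by (simp add: H_def E_def)
qed

lemma deg_exp_minus_one_power_nth_eq_0:
  "n < k \<Longrightarrow> fps_nth (deg_exp_minus_one lam ^ k) n = 0"
  using startsby_zero_power_prefix[OF deg_exp_minus_one_nth_0] by blast

lemma gen_ff_eq_sum_ffall:
  "gen_ff x n lam = (\<Sum>k=0..n. fact n / fact k * fps_nth (deg_exp_minus_one lam ^ k) n * ffall x k)"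
proof -
  have "gen_ff x n lam = fact n * fps_nth (fps_binomial x oo deg_exp_minus_one lam) n"
    by (simp flip: deg_exp_eq_binomial_compose)
  also have "\<dots> = fact n * (\<Sum>k=0..n. (x gchoose k) * fps_nth (deg_exp_minus_one lam ^ k) n)"
    by (simp add: fps_compose_nth)
  also have "\<dots> = (\<Sum>k=0..n. fact n / fact k * fps_nth (deg_exp_minus_one lam ^ k) n * ffall x k)"
    by (simp add: sum_distrib_left ffall_eq_fact_gchoose mult_ac)
  finally show ?thesis .
qed

lemma ffall_of_nat_eq_0: "m < k \<Longrightarrow> ffall (of_nat m) k = 0"
  by (simp add: ffall_eq_fact_gchoose flip: binomial_gbinomial)

lemma ffall_of_nat_self: "ffall (of_nat m) m = fact m"
  by (simp add: ffall_eq_fact_gchoose flip: binomial_gbinomial)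

lemma sum_ffall_eq_0_imp_coeff_eq_0:
  fixes e :: "nat \<Rightarrow> real"
  assumes "\<And>x. (\<Sum>k=0..n. e k * ffall x k) = 0" and "m \<le> n"
  shows "e m = 0"
  using \<open>m \<le> n\<close>
proof (induction m rule: less_induct)
  case (less m)
  have "0 = (\<Sum>k=0..n. e k * ffall (of_nat m) k)"
    using assms(1) by simp
  also have "\<dots> = (\<Sum>k\<in>{m}. e k * ffall (of_nat m) k)"
  proof (rule sum.mono_neutral_right)
    show "\<forall>k\<in>{0..n} - {m}. e k * ffall (of_nat m) k = 0"
      using less ffall_of_nat_eq_0 by (auto simp: nat_neq_iff)
  qed (use less.prems in auto)
  finally show ?case
    by (simp add: ffall_of_nat_self)
qed

lemma deg_stirling2_eq:
  "deg_stirling2 lam n k = fact n / fact k * fps_nth (deg_exp_minus_one lam ^ k) n"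
proof -
  define c where "c k = fact n / fact k * fps_nth (deg_exp_minus_one lam ^ k) n" for k
  have c: "(\<forall>k>n. c k = 0) \<and> (\<forall>x. gen_ff x n lam = (\<Sum>k=0..n. c k * ffall x k))"
    by (simp add: c_def deg_exp_minus_one_power_nth_eq_0 gen_ff_eq_sum_ffall)
  have "deg_stirling2 lam n = c"
    unfolding deg_stirling2_def
  proof (rule the_equality)
    fix d
    assume d: "(\<forall>k>n. d k = 0) \<and> (\<forall>x. gen_ff x n lam = (\<Sum>k=0..n. d k * ffall x k))"
    show "d = c"
    proof
      fix m
      show "d m = c m"
      proof (cases "m \<le> n")
        case True
        have "(\<Sum>k=0..n. (d k - c k) * ffall x k) = 0" for x
          using c d by (simp add: left_diff_distrib sum_subtractf)
        from sum_ffall_eq_0_imp_coeff_eq_0[OF this True] show ?thesis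
          by simp
      qed (use c d in simp)
    qed
  qed (fact c)
  then show ?thesis
    by (simp add: c_def)
qed

lemma fps_nth_compose_deg_exp_minus_one:
  "fact n * fps_nth (A oo deg_exp_minus_one lam) n
     = (\<Sum>k=0..n. fact k * deg_stirling2 lam n k * fps_nth A k)"
  by (simp add: fps_compose_nth deg_stirling2_eq sum_distrib_left mult_ac)

text \<open>\<open>((1 + s)\<^sup>\<lambda> - 1) / \<lambda>\<close> is the degenerate logarithm \<open>log\<^sub>\<lambda>(1 + s)\<close>, the
  compositional inverse of \<open>e\<^sub>\<lambda>(t) - 1\<close>; this series is \<open>log\<^sub>\<lambda>(1 + s) / s\<close>.\<close>
definition deg_log_div_X :: "real \<Rightarrow> real fps" where
  "deg_log_div_X lam = Abs_fps (\<lambda>m. lam ^ m / fact (m + 1) * gen_ff 1 (m + 1) (1 / lam))"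

lemma deg_log_div_X_nth [simp]:
  "fps_nth (deg_log_div_X lam) m = lam ^ m / fact (m + 1) * gen_ff 1 (m + 1) (1 / lam)"
  by (simp add: deg_log_div_X_def)

lemma fps_X_mult_deg_log_div_X:
  assumes "lam \<noteq> 0"
  shows "fps_X * deg_log_div_X lam = fps_const (1 / lam) * (fps_binomial lam - 1)"
proof (rule fps_ext)
  fix n
  show "fps_nth (fps_X * deg_log_div_X lam) n = fps_nth (fps_const (1 / lam) * (fps_binomial lam - 1)) n"
  proof (cases n)
    case (Suc m)
    have "(lam gchoose Suc m) = ffall lam (Suc m) / fact (Suc m)"
      by (simp add: ffall_eq_fact_gchoose del: fact_Suc)
    then have "(lam gchoose Suc m) = lam ^ Suc m * gen_ff 1 (Suc m) (1 / lam) / fact (Suc m)"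
      by (simp only: ffall_eq_power_gen_ff[OF assms])
    with Suc assms show ?thesis
      by (simp add: field_simps del: fact_Suc)
  qed simp
qed

lemma fps_X_div_deg_exp_minus_one:
  assumes "lam \<noteq> 0"
  shows "fps_X / deg_exp_minus_one lam = deg_log_div_X lam oo deg_exp_minus_one lam"
proof -
  define E where "E = deg_exp_minus_one lam"
  have E0: "fps_nth E 0 = 0"
    by (simp add: E_def)
  have "E * (deg_log_div_X lam oo E) = (fps_X * deg_log_div_X lam) oo E"
    using E0 by (simp add: fps_compose_mult_distrib)
  also have "\<dots> = fps_const (1 / lam) * ((fps_binomial lam oo E) - 1)"
    using E0 assms by (simp add: fps_X_mult_deg_log_div_X fps_compose_mult_distrib fps_compose_sub_distrib)
  also have "\<dots> = fps_X"
    using assms by (simp add: E_def deg_exp_self algebra_simps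
        flip: deg_exp_eq_binomial_compose fps_const_mult)
  finally have "E * (deg_log_div_X lam oo E) = fps_X" .
  then show ?thesis
    using deg_exp_minus_one_nonzero by (metis E_def nonzero_mult_div_cancel_left)
qed

lemma deg_bernoulli_eq_sum_deg_stirling2:
  assumes "lam \<noteq> 0"
  shows "deg_bernoulli lam n x
           = (\<Sum>k=0..n. fact k * deg_stirling2 lam n k * fps_nth (fps_binomial x * deg_log_div_X lam) k)"
proof -
  have "fps_X / (deg_exp lam 1 - 1) * deg_exp lam x
          = (fps_binomial x * deg_log_div_X lam) oo deg_exp_minus_one lam"
    using assms
    by (simp add: deg_exp_eq_binomial_compose[of lam x] fps_compose_mult_distrib mult.commute
        fps_X_div_deg_exp_minus_one flip: deg_exp_minus_one_def)
  then show ?thesis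
    by (simp add: deg_bernoulli_def fps_nth_compose_deg_exp_minus_one)
qed

theorem theorem7:
  fixes lam x :: real and n :: nat
  assumes "lam \<noteq> 0"
  shows "deg_bernoulli lam n x =
           (\<Sum>k=0..n. fact k * deg_stirling2 lam n k *
              (\<Sum>j=0..k. (x gchoose j) * lam ^ (k - j) / fact (k - j + 1)
                            * gen_ff 1 (k - j + 1) (1 / lam))) \<and>
         deg_bernoulli lam n 0 =
           (\<Sum>k=0..n. fact k * deg_stirling2 lam n k *
              lam ^ k / fact (k + 1) * gen_ff 1 (k + 1) (1 / lam))"
  using deg_bernoulli_eq_sum_deg_stirling2[OF assms, of n x]
    deg_bernoulli_eq_sum_deg_stirling2[OF assms, of n 0]
  by (simp add: fps_mult_nth mult.assoc)

end
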